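(* Let $s_1\ge\dots\ge s_p$ be the eigenvalues of $\widehat\Sigma$ and $v_1,\dots,v_p$ corresponding orthonormal eigenvectors. Let $\lambda>0$ satisfy $$\lambda\sum_{j=i}^p s_j\langle\beta_0,v_j\rangle^2\ge\frac{\sigma^2}{n}\sum_{j=i}^ps_j\qquad\text{for all } i=1,\dots,p.$$ Then the map $t\mapsto\mathcal{R}^{\mathrm{in}}_{\lambda,\beta_0}(\hat\beta^{\mathrm{GF}}_{\lambda,t})$ is monotonically decreasing on $[0,\infty)$.
   Context: Let $n,p\in\mathbb{N}$. Observations $(x_i,y_i)$, $i=1,\dots,n$, are i.i.d. with $x_i\in\mathbb{R}^p$, $y_i\in\mathbb{R}$, $y_i=x_i^\top\beta_0+\varepsilon_i$, $\mathbb{E}[\varepsilon_i\mid x_i]=0$, $\operatorname{Var}(\varepsilon_i\mid x_i)=\sigma^2>0$. $X\in\mathbb{R}^{n\times p}$ has rows $x_i^\top$, $y=(y_i)$; assume $\beta_0=X^+X\beta_0$. Matrix functions are defined by functional calculus. $\widehat\Sigma=\frac1nX^\top X$, $\widehat\Sigma_\lambda=\widehat\Sigma+\lambda I_p$, $y_\lambda=\frac1n\widehat\Sigma_\lambda^{-1/2}X^\top y$. Gradient flow estimator for the ridge criterion $\frac1{2n}\|y-X\beta\|^2+\frac\lambda2\|\beta\|^2$: $\hat\beta^{\mathrm{GF}}_{\lambda,t}=\widehat\Sigma_\lambda^{-1/2}(I_p-\exp(-t\widehat\Sigma_\lambda))y_\lambda$, $t\ge0$. For an estimator $\hat\beta$: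 $\mathcal{R}^{\mathrm{in}}_{\lambda,\beta_0}(\hat\beta)=\mathbb{E}[\|\widehat\Sigma_\lambda^{1/2}(\hat\beta-\beta_0)\|^2\mid X]$. *)

theory Defs
  imports "HOL-Probability.Probability"
begin

definition eigvals :: "real^'n^'n \<Rightarrow> real set" where
  "eigvals A = {\<mu>. \<exists>x. x \<noteq> 0 \<and> A *v x = \<mu> *\<^sub>R x}"

(* Functional calculus f(A) for a real symmetric (hence orthogonally diagonalisable) matrix A:
   f(A) = sum over eigenvalues mu of f(mu) times the spectral projection onto the eigenspace of mu,
   the spectral projection being written as the Lagrange product prod_{nu <> mu} (A - nu I)/(mu - nu).
   For A = sum_j mu_j v_j v_j^T this equals sum_j f(mu_j) v_j v_j^T. *)
definition matfun :: "(real \<Rightarrow> real) \<Rightarrow> real^'n^'n \<Rightarrow> real^'n^'n" where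
  "matfun f A = (\<Sum>\<mu>\<in>eigvals A. f \<mu> *\<^sub>R
      foldr (\<lambda>\<nu> B. ((1 / (\<mu> - \<nu>)) *\<^sub>R (A - mat \<nu>)) ** B)
            (sorted_list_of_set (eigvals A - {\<mu>})) (mat 1))"

(* X has n = CARD('n) rows x_i^T and p = CARD('p) columns *)
definition Sigma_hat :: "real^'p^'n \<Rightarrow> real^'p^'p" where
  "Sigma_hat X = (1 / real CARD('n)) *\<^sub>R (transpose X ** X)"

definition Sigma_lam :: "real^'p^'n \<Rightarrow> real \<Rightarrow> real^'p^'p" where
  "Sigma_lam X lam = Sigma_hat X + lam *\<^sub>R mat 1"

definition y_lam :: "real^'p^'n \<Rightarrow> real \<Rightarrow> real^'n \<Rightarrow> real^'p" where
  "y_lam X lam y = (1 / real CARD('n)) *\<^sub>R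
      (matfun (\<lambda>x. 1 / sqrt x) (Sigma_lam X lam) *v (transpose X *v y))"

definition beta_GF :: "real^'p^'n \<Rightarrow> real \<Rightarrow> real \<Rightarrow> real^'n \<Rightarrow> real^'p" where
  "beta_GF X lam t y = matfun (\<lambda>x. 1 / sqrt x) (Sigma_lam X lam) *v
      ((mat 1 - matfun (\<lambda>x. exp (- t * x)) (Sigma_lam X lam)) *v y_lam X lam y)"

(* in-sample risk; the conditioning on X is modelled by X being a fixed (deterministic) matrix
   and the estimator being a random variable over the noise probability space M *)
definition risk_in :: "'a measure \<Rightarrow> real^'p^'n \<Rightarrow> real \<Rightarrow> real^'p \<Rightarrow> ('a \<Rightarrow> real^'p) \<Rightarrow> real" where
  "risk_in M X lam beta0 bhat =
     (\<integral>\<omega>. (norm (matfun sqrt (Sigma_lam X lam) *v (bhat \<omega> - beta0)))\<^sup>2 \<partial>M)"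

end

theory Submission
  imports Defs
begin

(* In an orthonormal eigenbasis v_j of Sigma_hat every matrix function of Sigma_lam acts
   diagonally, so the j-th coordinate of Sigma_lam^(1/2) (beta_GF_t - beta0) is an affine function
   of the noise. For uncorrelated noise the in-sample risk therefore splits into a sum over j of
   a squared bias b_j^2 (lam + s_j e_j)^2 / (s_j + lam) and a variance
   (sigma^2/n) s_j (1 - e_j)^2 / (s_j + lam), where b_j = <beta0, v_j> and e_j = exp (-t (s_j + lam)).
   The t-derivative of this sum is at most sum_j 2 e_j s_j (sigma^2/n - lam b_j^2). As s_j
   decreases in j, the weights e_j increase, and Abel summation against the tail sums controlled
   by the hypothesis shows that the derivative is nonpositive. *)

section \<open>Orthonormal bases\<close>

definition orthonormal_basis :: "'i set \<Rightarrow> ('i \<Rightarrow> 'a::euclidean_space) \<Rightarrow> bool" where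
  "orthonormal_basis J v \<longleftrightarrow> finite J \<and> card J = DIM('a) \<and>
     (\<forall>i\<in>J. \<forall>j\<in>J. v i \<bullet> v j = (if i = j then 1 else 0))"

lemma orthonormal_basis_inner_sum:
  assumes "orthonormal_basis J v" and "k \<in> J"
  shows "(\<Sum>j\<in>J. c j *\<^sub>R v j) \<bullet> v k = c k"
proof -
  have "(\<Sum>j\<in>J. c j *\<^sub>R v j) \<bullet> v k = (\<Sum>j\<in>J. if j = k then c j else 0)"
    unfolding inner_sum_left
    by (rule sum.cong) (use assms in \<open>auto simp: orthonormal_basis_def\<close>)
  also have "\<dots> = c k"
    using assms by (simp add: orthonormal_basis_def)
  finally show ?thesis .
qed

lemma orthonormal_basis_nonzero:
  assumes "orthonormal_basis J v" and "j \<in> J"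
  shows "v j \<noteq> 0"
  using assms unfolding orthonormal_basis_def by (metis inner_zero_left zero_neq_one)

lemma orthonormal_basis_expansion:
  fixes v :: "'i \<Rightarrow> 'a::euclidean_space"
  assumes "orthonormal_basis J v"
  shows "x = (\<Sum>j\<in>J. (x \<bullet> v j) *\<^sub>R v j)"
proof -
  from assms have fin: "finite J" and card: "card J = DIM('a)"
    and orth: "\<And>i j. i \<in> J \<Longrightarrow> j \<in> J \<Longrightarrow> v i \<bullet> v j = (if i = j then 1 else 0)"
    by (auto simp: orthonormal_basis_def)
  have inj: "inj_on v J"
    by (rule inj_onI) (metis orth zero_neq_one)
  have "pairwise orthogonal (v ` J)"
    unfolding pairwise_def orthogonal_def using orth by auto
  moreover have "0 \<notin> v ` J"
    using orth by force
  ultimately have "independent (v ` J)"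
    by (rule pairwise_orthogonal_independent)
  then have "UNIV \<subseteq> span (v ` J)"
    by (rule card_ge_dim_independent[rotated]) (simp_all add: card card_image[OF inj])
  then have "(\<Sum>b\<in>v ` J. (x \<bullet> b) *\<^sub>R b) = x"
    using \<open>pairwise orthogonal (v ` J)\<close> orth fin
    by (intro orthonormal_basis_expand) (auto simp: norm_eq_1)
  then show ?thesis
    by (simp add: sum.reindex[OF inj])
qed

lemma orthonormal_basis_norm_sq:
  assumes "orthonormal_basis J v"
  shows "(norm x)\<^sup>2 = (\<Sum>j\<in>J. (x \<bullet> v j)\<^sup>2)"
proof -
  have "(norm x)\<^sup>2 = x \<bullet> x"
    by (simp add: power2_norm_eq_inner)
  also have "\<dots> = (\<Sum>j\<in>J. (x \<bullet> v j) *\<^sub>R v j) \<bullet> x"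
    by (rule arg_cong[where f = "\<lambda>y. y \<bullet> x", OF orthonormal_basis_expansion[OF assms]])
  finally show ?thesis
    by (simp add: inner_sum_left power2_eq_square) (simp add: inner_commute)
qed

section \<open>Matrix functions on an orthonormal eigenbasis\<close>

lemma matrix_vector_mult_mat: "(mat c :: real^'n^'n) *v x = c *\<^sub>R x"
  by (simp add: vec_eq_iff matrix_vector_mult_def mat_def if_distrib[of "\<lambda>z. z * _"] cong: if_cong)

lemma sum_matrix_vector_mult: "(sum F S :: real^'n^'m) *v x = (\<Sum>i\<in>S. F i *v x)"
  by (induction S rule: infinite_finite_induct) (simp_all add: matrix_vector_mult_add_rdistrib)

lemma lagrange_product_eigvec:
  fixes A :: "real^'n^'n"
  assumes eig: "A *v w = c *\<^sub>R w" and "finite S"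
  shows "foldr (\<lambda>\<nu> B. ((1 / (m - \<nu>)) *\<^sub>R (A - mat \<nu>)) ** B) (sorted_list_of_set S) (mat 1) *v w
       = (\<Prod>\<nu>\<in>S. (c - \<nu>) / (m - \<nu>)) *\<^sub>R w"
proof -
  have "foldr (\<lambda>\<nu> B. ((1 / (m - \<nu>)) *\<^sub>R (A - mat \<nu>)) ** B) L (mat 1) *v w
      = prod_list (map (\<lambda>\<nu>. (c - \<nu>) / (m - \<nu>)) L) *\<^sub>R w" for L
  proof (induction L)
    case Nil
    then show ?case by simp
  next
    case (Cons \<nu> L)
    define P where "P = prod_list (map (\<lambda>\<nu>. (c - \<nu>) / (m - \<nu>)) L)"
    have "foldr (\<lambda>\<nu> B. ((1 / (m - \<nu>)) *\<^sub>R (A - mat \<nu>)) ** B) (\<nu> # L) (mat 1) *v w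
        = (1 / (m - \<nu>)) *\<^sub>R ((A - mat \<nu>) *v (P *\<^sub>R w))"
      by (simp add: matrix_vector_mul_assoc[symmetric] scaleR_matrix_vector_assoc[symmetric]
          Cons P_def)
    also have "\<dots> = ((c - \<nu>) / (m - \<nu>) * P) *\<^sub>R w"
      by (simp add: matrix_vector_mult_diff_rdistrib matrix_vector_mult_scaleR eig
          matrix_vector_mult_mat algebra_simps diff_divide_distrib)
    finally show ?case by (simp add: P_def)
  qed
  then show ?thesis
    using \<open>finite S\<close> by (simp add: prod.distinct_set_conv_list[symmetric])
qed

lemma inner_matrix_vector_mult_eigenbasis:
  fixes A :: "real^'n^'n"
  assumes basis: "orthonormal_basis J v"
    and eig: "\<And>j. j \<in> J \<Longrightarrow> A *v v j = \<mu> j *\<^sub>R v j" and "k \<in> J"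
  shows "(A *v x) \<bullet> v k = \<mu> k * (x \<bullet> v k)"
proof -
  have "A *v x = A *v (\<Sum>j\<in>J. (x \<bullet> v j) *\<^sub>R v j)"
    by (subst orthonormal_basis_expansion[OF basis]) (rule refl)
  also have "\<dots> = (\<Sum>j\<in>J. (\<mu> j * (x \<bullet> v j)) *\<^sub>R v j)"
    by (simp add: vec.sum matrix_vector_mult_scaleR eig mult.commute)
  finally show ?thesis
    using orthonormal_basis_inner_sum[OF basis \<open>k \<in> J\<close>] by simp
qed

lemma eigvals_subset_eigenbasis:
  fixes A :: "real^'n^'n"
  assumes basis: "orthonormal_basis J v"
    and eig: "\<And>j. j \<in> J \<Longrightarrow> A *v v j = \<mu> j *\<^sub>R v j"
  shows "eigvals A \<subseteq> \<mu> ` J"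
proof
  fix m assume "m \<in> eigvals A"
  then obtain x where "x \<noteq> 0" and Ax: "A *v x = m *\<^sub>R x"
    unfolding eigvals_def by auto
  show "m \<in> \<mu> ` J"
  proof (rule ccontr)
    assume m: "m \<notin> \<mu> ` J"
    have "x \<bullet> v k = 0" if "k \<in> J" for k
    proof -
      have "m * (x \<bullet> v k) = \<mu> k * (x \<bullet> v k)"
        using inner_matrix_vector_mult_eigenbasis[OF basis eig that, of x] by (simp add: Ax)
      with m that show ?thesis by auto
    qed
    then have "x = 0"
      by (subst orthonormal_basis_expansion[OF basis]) simp
    with \<open>x \<noteq> 0\<close> show False ..
  qed
qed

lemma matfun_eigvec:
  fixes A :: "real^'n^'n"
  assumes basis: "orthonormal_basis J v"
    and eig: "\<And>j. j \<in> J \<Longrightarrow> A *v v j = \<mu> j *\<^sub>R v j" and k: "k \<in> J"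
  shows "matfun f A *v v k = f (\<mu> k) *\<^sub>R v k"
proof -
  have fin: "finite (eigvals A)"
    using eigvals_subset_eigenbasis[OF basis eig] basis
    by (auto simp: orthonormal_basis_def intro: finite_subset)
  have mem: "\<mu> k \<in> eigvals A"
    unfolding eigvals_def using eig[OF k] orthonormal_basis_nonzero[OF basis k] by blast
  have lagrange: "(\<Prod>\<nu>\<in>eigvals A - {m}. (\<mu> k - \<nu>) / (m - \<nu>)) = (if m = \<mu> k then 1 else 0)"
    for m
    using fin mem by (auto intro!: prod.neutral prod_zero)
  have "matfun f A *v v k = (\<Sum>m\<in>eigvals A. (if m = \<mu> k then f m else 0) *\<^sub>R v k)"
    unfolding matfun_def sum_matrix_vector_mult
    by (simp add: scaleR_matrix_vector_assoc[symmetric] lagrange_product_eigvec[OF eig[OF k]] fin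
        lagrange if_distrib[of "\<lambda>z. _ * z"] cong: if_cong)
  also have "\<dots> = f (\<mu> k) *\<^sub>R v k"
    using fin mem by (simp add: scaleR_sum_left[symmetric] sum.delta')
  finally show ?thesis .
qed

lemma inner_matfun_eigenbasis:
  fixes A :: "real^'n^'n"
  assumes basis: "orthonormal_basis J v"
    and eig: "\<And>j. j \<in> J \<Longrightarrow> A *v v j = \<mu> j *\<^sub>R v j" and "k \<in> J"
  shows "(matfun f A *v x) \<bullet> v k = f (\<mu> k) * (x \<bullet> v k)"
  using inner_matrix_vector_mult_eigenbasis[OF basis matfun_eigvec[OF basis eig] \<open>k \<in> J\<close>] .

section \<open>Second moments of white noise\<close>

lemma (in prob_space) white_noise_moments:
  fixes eps :: "'a \<Rightarrow> real^'n"
  assumes meas: "\<And>i. (\<lambda>\<omega>. eps \<omega> $ i) \<in> borel_measurable M"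
    and indep: "indep_vars (\<lambda>_. borel) (\<lambda>i \<omega>. eps \<omega> $ i) UNIV"
    and sq_int: "\<And>i. integrable M (\<lambda>\<omega>. (eps \<omega> $ i)\<^sup>2)"
    and mean: "\<And>i. (\<integral>\<omega>. eps \<omega> $ i \<partial>M) = 0"
    and var: "\<And>i. (\<integral>\<omega>. (eps \<omega> $ i)\<^sup>2 \<partial>M) = \<sigma>\<^sup>2"
  shows "has_bochner_integral M (\<lambda>\<omega>. eps \<omega> $ i) 0"
    and "has_bochner_integral M (\<lambda>\<omega>. eps \<omega> $ i * eps \<omega> $ k) (if i = k then \<sigma>\<^sup>2 else 0)"
proof -
  have int: "integrable M (\<lambda>\<omega>. eps \<omega> $ i)" for i
    by (rule square_integrable_imp_integrable[OF meas sq_int])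
  then show "has_bochner_integral M (\<lambda>\<omega>. eps \<omega> $ i) 0"
    using mean by (simp add: has_bochner_integral_iff)
  show "has_bochner_integral M (\<lambda>\<omega>. eps \<omega> $ i * eps \<omega> $ k) (if i = k then \<sigma>\<^sup>2 else 0)"
  proof (cases "i = k")
    case True
    then show ?thesis
      using sq_int[of i] var[of i] by (simp add: has_bochner_integral_iff power2_eq_square)
  next
    case False
    have ind: "indep_vars (\<lambda>_. borel) (\<lambda>i \<omega>. eps \<omega> $ i) {i, k}"
      by (rule indep_vars_subset[OF indep]) auto
    have "integrable M (\<lambda>\<omega>. \<Prod>l\<in>{i, k}. eps \<omega> $ l)"
      by (rule indep_vars_integrable[OF _ ind]) (auto intro: int)
    moreover have "(\<integral>\<omega>. (\<Prod>l\<in>{i, k}. eps \<omega> $ l) \<partial>M) = (\<Prod>l\<in>{i, k}. \<integral>\<omega>. eps \<omega> $ l \<partial>M)"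
      by (rule indep_vars_lebesgue_integral[OF _ ind]) (auto intro: int)
    ultimately show ?thesis
      using False mean by (simp add: has_bochner_integral_iff)
  qed
qed

lemma (in prob_space) has_bochner_integral_affine_noise_sq:
  fixes eps :: "'a \<Rightarrow> real^'n"
  assumes mean: "\<And>i. has_bochner_integral M (\<lambda>\<omega>. eps \<omega> $ i) 0"
    and cov: "\<And>i k. has_bochner_integral M (\<lambda>\<omega>. eps \<omega> $ i * eps \<omega> $ k) (if i = k then \<sigma>\<^sup>2 else 0)"
  shows "has_bochner_integral M (\<lambda>\<omega>. (\<alpha> + \<beta> * (eps \<omega> \<bullet> u))\<^sup>2) (\<alpha>\<^sup>2 + \<beta>\<^sup>2 * \<sigma>\<^sup>2 * (u \<bullet> u))"
proof -
  have expand: "(\<alpha> + \<beta> * (eps \<omega> \<bullet> u))\<^sup>2 = \<alpha>\<^sup>2 + (2 * \<alpha> * \<beta>) * (\<Sum>i\<in>UNIV. u $ i * eps \<omega> $ i)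
       + \<beta>\<^sup>2 * (\<Sum>i\<in>UNIV. \<Sum>k\<in>UNIV. (u $ i * u $ k) * (eps \<omega> $ i * eps \<omega> $ k))" for \<omega>
  proof -
    have e: "eps \<omega> \<bullet> u = (\<Sum>i\<in>UNIV. u $ i * eps \<omega> $ i)"
      by (simp add: inner_vec_def mult.commute)
    have "(\<Sum>i\<in>UNIV. u $ i * eps \<omega> $ i)\<^sup>2
        = (\<Sum>i\<in>UNIV. \<Sum>k\<in>UNIV. (u $ i * u $ k) * (eps \<omega> $ i * eps \<omega> $ k))"
      by (simp add: power2_eq_square sum_product mult_ac)
    then show ?thesis
      unfolding e by (simp add: power2_sum power_mult_distrib algebra_simps)
  qed
  have "has_bochner_integral M (\<lambda>\<omega>. (\<alpha> + \<beta> * (eps \<omega> \<bullet> u))\<^sup>2)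
     (\<alpha>\<^sup>2 + (2 * \<alpha> * \<beta>) * (\<Sum>i\<in>UNIV. u $ i * 0)
       + \<beta>\<^sup>2 * (\<Sum>i\<in>UNIV. \<Sum>k\<in>UNIV. (u $ i * u $ k) * (if i = k then \<sigma>\<^sup>2 else 0)))"
    unfolding expand
    by (intro has_bochner_integral_add has_bochner_integral_mult_right has_bochner_integral_sum
        mean cov) (simp add: has_bochner_integral_iff prob_space)
  moreover have "(\<Sum>i\<in>UNIV. \<Sum>k\<in>UNIV. (u $ i * u $ k) * (if i = k then \<sigma>\<^sup>2 else 0))
      = \<sigma>\<^sup>2 * (u \<bullet> u)"
    by (simp add: if_distrib[of "\<lambda>z. _ * z"] inner_vec_def sum_distrib_left power2_eq_square
        mult_ac cong: if_cong)
  ultimately show ?thesis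
    by (simp add: mult.assoc)
qed

section \<open>Monotonicity of the bias-variance sum\<close>

definition gf_risk_term :: "real \<Rightarrow> real \<Rightarrow> real \<Rightarrow> real \<Rightarrow> real \<Rightarrow> real" where
  "gf_risk_term lam c s b t =
     (b\<^sup>2 * (lam + s * exp (- t * (s + lam)))\<^sup>2 + c * s * (1 - exp (- t * (s + lam)))\<^sup>2) / (s + lam)"

lemma has_real_derivative_gf_risk_term:
  assumes "s + lam \<noteq> 0"
  shows "((\<lambda>t. gf_risk_term lam c s b t) has_real_derivative
      2 * s * exp (- t * (s + lam)) *
        (c * (1 - exp (- t * (s + lam))) - b\<^sup>2 * (lam + s * exp (- t * (s + lam))))) (at t)"
proof -
  have "((\<lambda>t. b\<^sup>2 * (lam + s * exp (- t * (s + lam)))\<^sup>2 + c * s * (1 - exp (- t * (s + lam)))\<^sup>2)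
      has_real_derivative (s + lam) * (2 * s * exp (- t * (s + lam)) *
        (c * (1 - exp (- t * (s + lam))) - b\<^sup>2 * (lam + s * exp (- t * (s + lam)))))) (at t)"
    by (rule derivative_eq_intros refl)+ (simp add: algebra_simps power2_eq_square)
  from DERIV_cdivide[OF this, of "s + lam"] show ?thesis
    using assms by (simp add: gf_risk_term_def)
qed

lemma sum_nonpos_increasing_weights:
  fixes w d :: "nat \<Rightarrow> real"
  assumes mono: "\<And>i j. 1 \<le> i \<Longrightarrow> i \<le> j \<Longrightarrow> j \<le> p \<Longrightarrow> w i \<le> w j"
    and w1: "0 \<le> w 1"
    and tails: "\<And>i. i \<in> {1..p} \<Longrightarrow> (\<Sum>j=i..p. d j) \<le> 0"
  shows "(\<Sum>j=1..p. w j * d j) \<le> 0"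
proof (cases "p = 0")
  case True
  then show ?thesis by simp
next
  case False
  have abel: "(\<Sum>j=i..p. w j * d j) \<le> w i * (\<Sum>j=i..p. d j)" if "1 \<le> i" "i \<le> p" for i
    using that(2,1)
  proof (induction i rule: inc_induct)
    case base
    then show ?case by simp
  next
    case (step m)
    have tail: "(\<Sum>j=Suc m..p. d j) \<le> 0" and "w m \<le> w (Suc m)"
      using tails mono step.hyps step.prems by auto
    have "(\<Sum>j=m..p. w j * d j) = w m * d m + (\<Sum>j=Suc m..p. w j * d j)"
      using step.hyps by (simp add: sum.atLeast_Suc_atMost)
    also have "\<dots> \<le> w m * d m + w (Suc m) * (\<Sum>j=Suc m..p. d j)"
      using step.IH step.prems by simp
    also have "\<dots> \<le> w m * d m + w m * (\<Sum>j=Suc m..p. d j)"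
      using tail \<open>w m \<le> w (Suc m)\<close> by (simp add: mult_right_mono_neg)
    also have "\<dots> = w m * (\<Sum>j=m..p. d j)"
      using step.hyps by (simp add: sum.atLeast_Suc_atMost distrib_left)
    finally show ?case .
  qed
  have "(\<Sum>j=1..p. w j * d j) \<le> w 1 * (\<Sum>j=1..p. d j)"
    using abel False by simp
  also have "\<dots> \<le> 0"
    using w1 tails[of 1] False by (simp add: mult_nonneg_nonpos)
  finally show ?thesis .
qed

lemma gf_risk_rate_le:
  fixes s c e b lam :: real
  assumes "0 \<le> s" and "0 \<le> c" and "0 < e"
  shows "2 * s * e * (c * (1 - e) - b\<^sup>2 * (lam + s * e)) \<le> 2 * e * (s * (c - lam * b\<^sup>2))"
proof -
  have "c * (1 - e) - b\<^sup>2 * (lam + s * e) \<le> c - lam * b\<^sup>2"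
    using assms by (simp add: algebra_simps)
  then have "(2 * s * e) * (c * (1 - e) - b\<^sup>2 * (lam + s * e)) \<le> (2 * s * e) * (c - lam * b\<^sup>2)"
    using assms by (intro mult_left_mono) auto
  then show ?thesis
    by (simp add: mult_ac)
qed

lemma gf_risk_sum_antimono:
  fixes s b :: "nat \<Rightarrow> real"
  assumes s_nonneg: "\<And>j. j \<in> {1..p} \<Longrightarrow> 0 \<le> s j"
    and sorted: "\<And>i j. 1 \<le> i \<Longrightarrow> i \<le> j \<Longrightarrow> j \<le> p \<Longrightarrow> s j \<le> s i"
    and lam: "0 < lam" and c: "0 \<le> c"
    and tails: "\<And>i. i \<in> {1..p} \<Longrightarrow> c * (\<Sum>j=i..p. s j) \<le> lam * (\<Sum>j=i..p. s j * (b j)\<^sup>2)"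
    and t: "0 \<le> t1" "t1 \<le> t2"
  shows "(\<Sum>j=1..p. gf_risk_term lam c (s j) (b j) t2) \<le> (\<Sum>j=1..p. gf_risk_term lam c (s j) (b j) t1)"
proof (rule DERIV_nonpos_imp_nonincreasing[OF \<open>t1 \<le> t2\<close>])
  fix x assume x: "t1 \<le> x" "x \<le> t2"
  define e where "e j = exp (- x * (s j + lam))" for j
  define D where "D j = 2 * s j * e j * (c * (1 - e j) - (b j)\<^sup>2 * (lam + s j * e j))" for j
  have "((\<lambda>t. \<Sum>j=1..p. gf_risk_term lam c (s j) (b j) t) has_real_derivative (\<Sum>j=1..p. D j)) (at x)"
    unfolding D_def e_def
    by (intro DERIV_sum has_real_derivative_gf_risk_term) (use s_nonneg lam in force)
  moreover have "(\<Sum>j=1..p. D j) \<le> (\<Sum>j=1..p. (2 * e j) * (s j * (c - lam * (b j)\<^sup>2)))"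
    unfolding D_def by (intro sum_mono gf_risk_rate_le) (use s_nonneg c in \<open>auto simp: e_def\<close>)
  moreover have "(\<Sum>j=1..p. (2 * e j) * (s j * (c - lam * (b j)\<^sup>2))) \<le> 0"
  proof (rule sum_nonpos_increasing_weights)
    fix i j :: nat assume "1 \<le> i" "i \<le> j" "j \<le> p"
    then have "- x * (s i + lam) \<le> - x * (s j + lam)"
      using sorted x t by (simp add: mult_left_mono)
    then show "2 * e i \<le> 2 * e j"
      by (simp add: e_def)
  next
    show "0 \<le> 2 * e 1"
      by (simp add: e_def)
  next
    fix i assume "i \<in> {1..p}"
    then show "(\<Sum>j=i..p. s j * (c - lam * (b j)\<^sup>2)) \<le> 0"
      using tails[of i] by (simp add: sum_distrib_left sum_subtractf algebra_simps)
  qed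
  ultimately show "\<exists>y. ((\<lambda>t. \<Sum>j=1..p. gf_risk_term lam c (s j) (b j) t) has_real_derivative y) (at x)
      \<and> y \<le> 0"
    by auto
qed

section \<open>The in-sample risk of gradient flow\<close>

lemma Sigma_lam_eigvec:
  "Sigma_hat X *v w = s *\<^sub>R w \<Longrightarrow> Sigma_lam X lam *v w = (s + lam) *\<^sub>R w"
  by (simp add: Sigma_lam_def matrix_vector_mult_add_rdistrib matrix_vector_mult_mat
      scaleR_matrix_vector_assoc[symmetric] algebra_simps)

lemma inner_transpose_matrix_vector:
  fixes A :: "real^'n^'m"
  shows "(transpose A *v y) \<bullet> x = y \<bullet> (A *v x)"
  by (simp add: dot_lmul_matrix)

lemma inner_transpose_X_eigvec:
  fixes X :: "real^'p^'n"
  assumes "Sigma_hat X *v w = s *\<^sub>R w"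
  shows "(transpose X *v (X *v x)) \<bullet> w = real CARD('n) * s * (x \<bullet> w)"
proof -
  have "(transpose X *v (X *v x)) \<bullet> w = x \<bullet> (transpose X *v (X *v w))"
    by (metis inner_transpose_matrix_vector inner_commute)
  also have "transpose X *v (X *v w) = real CARD('n) *\<^sub>R (Sigma_hat X *v w)"
    by (simp add: Sigma_hat_def scaleR_matrix_vector_assoc[symmetric] matrix_vector_mul_assoc)
  finally show ?thesis
    using assms by simp
qed

lemma Sigma_hat_eigval_nonneg:
  fixes X :: "real^'p^'n"
  assumes "Sigma_hat X *v w = s *\<^sub>R w" and "w \<noteq> 0"
  shows "0 \<le> s"
proof -
  have "0 \<le> (X *v w) \<bullet> (X *v w)"
    by simp
  also have "\<dots> = (transpose X *v (X *v w)) \<bullet> w"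
    by (rule inner_transpose_matrix_vector[symmetric])
  also have "\<dots> = real CARD('n) * s * (w \<bullet> w)"
    by (rule inner_transpose_X_eigvec[OF assms(1)])
  moreover have "0 < w \<bullet> w"
    using \<open>w \<noteq> 0\<close> by simp
  ultimately have "0 \<le> real CARD('n) * s"
    using mult_neg_pos[of "real CARD('n) * s" "w \<bullet> w"] by linarith
  then show ?thesis
    by (simp add: zero_le_mult_iff)
qed

lemma inner_beta_GF_eigenbasis:
  fixes X :: "real^'p^'n"
  assumes basis: "orthonormal_basis J v"
    and eig: "\<And>j. j \<in> J \<Longrightarrow> Sigma_hat X *v v j = s j *\<^sub>R v j"
    and lam: "0 < lam" and j: "j \<in> J"
  shows "beta_GF X lam t y \<bullet> v j
    = (1 - exp (- t * (s j + lam))) / (real CARD('n) * (s j + lam)) * ((transpose X *v y) \<bullet> v j)"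
proof -
  have coord: "(matfun f (Sigma_lam X lam) *v x) \<bullet> v j = f (s j + lam) * (x \<bullet> v j)" for f x
    by (rule inner_matfun_eigenbasis[OF basis Sigma_lam_eigvec[OF eig] j])
  have "0 < s j + lam"
    using Sigma_hat_eigval_nonneg[OF eig[OF j] orthonormal_basis_nonzero[OF basis j]] lam by simp
  have "beta_GF X lam t y \<bullet> v j = 1 / sqrt (s j + lam) *
      (y_lam X lam y \<bullet> v j - exp (- t * (s j + lam)) * (y_lam X lam y \<bullet> v j))"
    unfolding beta_GF_def by (simp add: coord matrix_vector_mult_diff_rdistrib inner_diff_left)
  also have "y_lam X lam y \<bullet> v j
      = 1 / real CARD('n) * (1 / sqrt (s j + lam)) * ((transpose X *v y) \<bullet> v j)"
    unfolding y_lam_def by (simp add: coord del: transpose_matrix_vector)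
  finally show ?thesis
    using \<open>0 < s j + lam\<close> by (simp add: field_simps flip: real_sqrt_mult del: transpose_matrix_vector)
qed

lemma inner_sqrt_Sigma_lam_error_eigenbasis:
  fixes X :: "real^'p^'n"
  assumes basis: "orthonormal_basis J v"
    and eig: "\<And>j. j \<in> J \<Longrightarrow> Sigma_hat X *v v j = s j *\<^sub>R v j"
    and lam: "0 < lam" and j: "j \<in> J"
  shows "(matfun sqrt (Sigma_lam X lam) *v (beta_GF X lam t (X *v beta0 + z) - beta0)) \<bullet> v j
    = - (lam + s j * exp (- t * (s j + lam))) / sqrt (s j + lam) * (beta0 \<bullet> v j)
      + (1 - exp (- t * (s j + lam))) / (real CARD('n) * sqrt (s j + lam)) * (z \<bullet> (X *v v j))"
proof -
  have "0 < s j + lam"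
    using Sigma_hat_eigval_nonneg[OF eig[OF j] orthonormal_basis_nonzero[OF basis j]] lam by simp
  have "(transpose X *v (X *v beta0 + z)) \<bullet> v j = real CARD('n) * s j * (beta0 \<bullet> v j) + z \<bullet> (X *v v j)"
    using inner_transpose_X_eigvec[OF eig[OF j]]
    by (simp add: matrix_vector_right_distrib inner_add_left inner_transpose_matrix_vector
        del: transpose_matrix_vector)
  moreover have "(matfun sqrt (Sigma_lam X lam) *v (beta_GF X lam t (X *v beta0 + z) - beta0)) \<bullet> v j
      = sqrt (s j + lam) * (beta_GF X lam t (X *v beta0 + z) \<bullet> v j - beta0 \<bullet> v j)"
    by (simp add: inner_matfun_eigenbasis[OF basis Sigma_lam_eigvec[OF eig] j] inner_diff_left)
  moreover have "sqrt a * ((1 - e) / (N * a) * (N * \<sigma> * b + E) - b)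
      = - (lam + \<sigma> * e) / sqrt a * b + (1 - e) / (N * sqrt a) * E"
    if "0 < a" "lam = a - \<sigma>" "0 < N" for a \<sigma> e N b E :: real
    using that(1,3) unfolding that(2) by (simp add: field_simps flip: real_sqrt_mult)
  ultimately show ?thesis
    using \<open>0 < s j + lam\<close> by (simp add: inner_beta_GF_eigenbasis[OF basis eig lam j])
qed

lemma risk_in_beta_GF:
  fixes X :: "real^'p^'n" and eps :: "'a \<Rightarrow> real^'n"
  assumes M: "prob_space M"
    and mean: "\<And>i. has_bochner_integral M (\<lambda>\<omega>. eps \<omega> $ i) 0"
    and cov: "\<And>i k. has_bochner_integral M (\<lambda>\<omega>. eps \<omega> $ i * eps \<omega> $ k) (if i = k then \<sigma>\<^sup>2 else 0)"
    and basis: "orthonormal_basis J v"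
    and eig: "\<And>j. j \<in> J \<Longrightarrow> Sigma_hat X *v v j = s j *\<^sub>R v j"
    and lam: "0 < lam"
  shows "risk_in M X lam beta0 (\<lambda>\<omega>. beta_GF X lam t (X *v beta0 + eps \<omega>))
    = (\<Sum>j\<in>J. gf_risk_term lam (\<sigma>\<^sup>2 / real CARD('n)) (s j) (beta0 \<bullet> v j) t)"
proof -
  define \<alpha> where "\<alpha> j = - (lam + s j * exp (- t * (s j + lam))) / sqrt (s j + lam) * (beta0 \<bullet> v j)" for j
  define \<beta> where "\<beta> j = (1 - exp (- t * (s j + lam))) / (real CARD('n) * sqrt (s j + lam))" for j
  have norm_sq: "(norm (matfun sqrt (Sigma_lam X lam) *v (beta_GF X lam t (X *v beta0 + eps \<omega>) - beta0)))\<^sup>2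
      = (\<Sum>j\<in>J. (\<alpha> j + \<beta> j * (eps \<omega> \<bullet> (X *v v j)))\<^sup>2)" for \<omega>
    unfolding orthonormal_basis_norm_sq[OF basis]
    by (intro sum.cong refl) (simp add: inner_sqrt_Sigma_lam_error_eigenbasis[OF basis eig lam] \<alpha>_def \<beta>_def)
  have "has_bochner_integral M (\<lambda>\<omega>. \<Sum>j\<in>J. (\<alpha> j + \<beta> j * (eps \<omega> \<bullet> (X *v v j)))\<^sup>2)
      (\<Sum>j\<in>J. (\<alpha> j)\<^sup>2 + (\<beta> j)\<^sup>2 * \<sigma>\<^sup>2 * ((X *v v j) \<bullet> (X *v v j)))"
    by (intro has_bochner_integral_sum prob_space.has_bochner_integral_affine_noise_sq[OF M mean cov])
  moreover have "(\<alpha> j)\<^sup>2 + (\<beta> j)\<^sup>2 * \<sigma>\<^sup>2 * ((X *v v j) \<bullet> (X *v v j))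
      = gf_risk_term lam (\<sigma>\<^sup>2 / real CARD('n)) (s j) (beta0 \<bullet> v j) t" if j: "j \<in> J" for j
  proof -
    have "0 < s j + lam"
      using Sigma_hat_eigval_nonneg[OF eig[OF j] orthonormal_basis_nonzero[OF basis j]] lam by simp
    have "(X *v v j) \<bullet> (X *v v j) = real CARD('n) * s j * (v j \<bullet> v j)"
      by (simp only: inner_transpose_matrix_vector[symmetric] inner_transpose_X_eigvec[OF eig[OF j]])
    also have "v j \<bullet> v j = 1"
      using basis j by (simp add: orthonormal_basis_def)
    finally have "(X *v v j) \<bullet> (X *v v j) = real CARD('n) * s j"
      by simp
    moreover have alg: "(- c / sqrt a * b)\<^sup>2 + (d / (N * sqrt a))\<^sup>2 * \<sigma>\<^sup>2 * (N * \<mu>)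
        = (b\<^sup>2 * c\<^sup>2 + \<sigma>\<^sup>2 / N * \<mu> * d\<^sup>2) / a"
      if "0 < a" "0 < N" for a b c d N \<mu> :: real
      using that by (simp add: power_mult_distrib power_divide field_simps) (simp add: power2_eq_square)
    ultimately show ?thesis
      unfolding \<alpha>_def \<beta>_def gf_risk_term_def using \<open>0 < s j + lam\<close>
      by (simp only: alg of_nat_0_less_iff zero_less_card_finite)
  qed
  ultimately show ?thesis
    unfolding risk_in_def norm_sq by (simp add: has_bochner_integral_iff)
qed

theorem proposition3p11:
  fixes X :: "real^'p^'n" and beta0 :: "real^'p" and sigma lam :: real
    and M :: "'a measure" and eps :: "'a \<Rightarrow> real^'n"
    and s :: "nat \<Rightarrow> real" and v :: "nat \<Rightarrow> real^'p"
  assumes M: "prob_space M"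
    and eps_meas: "\<And>i. (\<lambda>\<omega>. eps \<omega> $ i) \<in> borel_measurable M"
    and eps_indep: "prob_space.indep_vars M (\<lambda>_. borel) (\<lambda>i \<omega>. eps \<omega> $ i) UNIV"
    and eps_sq_int: "\<And>i. integrable M (\<lambda>\<omega>. (eps \<omega> $ i)\<^sup>2)"
    and eps_mean: "\<And>i. (\<integral>\<omega>. eps \<omega> $ i \<partial>M) = 0"
    and eps_var: "\<And>i. (\<integral>\<omega>. (eps \<omega> $ i)\<^sup>2 \<partial>M) = sigma\<^sup>2"
    and sigma_pos: "sigma > 0"
    and beta0_row: "\<exists>w. beta0 = transpose X *v w"
    and eig: "\<And>j. j \<in> {1..CARD('p)} \<Longrightarrow> Sigma_hat X *v v j = s j *\<^sub>R v j"
    and orth: "\<And>i j. i \<in> {1..CARD('p)} \<Longrightarrow> j \<in> {1..CARD('p)} \<Longrightarrow>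
                 v i \<bullet> v j = (if i = j then 1 else 0)"
    and sorted: "\<And>i j. 1 \<le> i \<Longrightarrow> i \<le> j \<Longrightarrow> j \<le> CARD('p) \<Longrightarrow> s j \<le> s i"
    and lam_pos: "lam > 0"
    and cond: "\<And>i. i \<in> {1..CARD('p)} \<Longrightarrow>
        lam * (\<Sum>j=i..CARD('p). s j * (beta0 \<bullet> v j)\<^sup>2)
          \<ge> sigma\<^sup>2 / real CARD('n) * (\<Sum>j=i..CARD('p). s j)"
  shows "\<forall>t1 t2. 0 \<le> t1 \<longrightarrow> t1 \<le> t2 \<longrightarrow>
           risk_in M X lam beta0 (\<lambda>\<omega>. beta_GF X lam t2 (X *v beta0 + eps \<omega>))
         \<le> risk_in M X lam beta0 (\<lambda>\<omega>. beta_GF X lam t1 (X *v beta0 + eps \<omega>))"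
proof (intro allI impI)
  fix t1 t2 :: real
  assume t: "0 \<le> t1" "t1 \<le> t2"
  have basis: "orthonormal_basis {1..CARD('p)} v"
    using orth by (simp add: orthonormal_basis_def)
  have s_nonneg: "0 \<le> s j" if "j \<in> {1..CARD('p)}" for j
    using Sigma_hat_eigval_nonneg[OF eig[OF that] orthonormal_basis_nonzero[OF basis that]] .
  note moments = prob_space.white_noise_moments[OF M eps_meas eps_indep eps_sq_int eps_mean eps_var]
  note risk = risk_in_beta_GF[OF M moments basis eig lam_pos]
  have "0 \<le> sigma\<^sup>2 / real CARD('n)"
    by simp
  with s_nonneg sorted lam_pos
  have "(\<Sum>j=1..CARD('p). gf_risk_term lam (sigma\<^sup>2 / real CARD('n)) (s j) (beta0 \<bullet> v j) t2)
      \<le> (\<Sum>j=1..CARD('p). gf_risk_term lam (sigma\<^sup>2 / real CARD('n)) (s j) (beta0 \<bullet> v j) t1)"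
    using cond t by (rule gf_risk_sum_antimono)
  then show "risk_in M X lam beta0 (\<lambda>\<omega>. beta_GF X lam t2 (X *v beta0 + eps \<omega>))
      \<le> risk_in M X lam beta0 (\<lambda>\<omega>. beta_GF X lam t1 (X *v beta0 + eps \<omega>))"
    by (simp only: risk)
qed

end
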